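(* Consider the setting described in the context. Minimizing the cost $I[S^K;Z^K]-h[H]$ over the variables $\Sigma^H>0$, $\Sigma^Z_K>0$ and block-diagonal $\tilde G_K=\mathrm{diag}(G(1),\dots,G(K))$ is equivalent to solving the following convex program: $$\min_{\Sigma^H,\ \Pi_K,\ \Sigma^Z_K,\ \tilde G_K}\ -\log\det(\Sigma^H)-\log\det(\Pi_K)\quad\text{s.t.}\quad \Pi_K\ge 0,\quad \begin{bmatrix}\Sigma^S_K-\Pi_K & (\Sigma^{SZ}_K)^\top\\ \Sigma^{SZ}_K & \Sigma^Z_K\end{bmatrix}\ge 0,$$ where $\Sigma^{SZ}_K=\tilde G_K\tilde C_KQ\tilde D_K^\top$ and $\Pi_K\in\mathbb{R}^{Kn_s\times Kn_s}$ is symmetric.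
   Context: Let $n_x,n_y,n_u,n_s,K\in\mathbb{N}$, $K\ge2$. Consider the system $X(k+1)=AX(k)+BU(k)+T(k)$, $Y(k)=CX(k)+W(k)$, $S(k)=DX(k)$ with $X(k)\in\mathbb{R}^{n_x}$, $Y(k)\in\mathbb{R}^{n_y}$, deterministic $U(k)\in\mathbb{R}^{n_u}$, $S(k)\in\mathbb{R}^{n_s}$, $D$ of full row rank; $T(k)$, $W(k)$ i.i.d. zero-mean Gaussian with covariances $\Sigma^T>0$, $\Sigma^W>0$; $X(1)\sim\mathcal{N}[\mu^X_1,\Sigma^X_1]$, $\Sigma^X_1>0$; all mutually independent. The disclosed output is $Z(k)=G(k)Y(k)+V(k)$ with $G(k)\in\mathbb{R}^{n_y\times n_y}$ deterministic and $V^K=(V(1)^\top,\dots,V(K)^\top)^\top$ zero-mean Gaussian, independent of everything else; the disclosed input is $R(k)=U(k)+H(k)$ where the stacked input noise $H\in\mathbb{R}^m$ is zero-mean Gaussian with covariance $\Sigma^H>0$, independent of everything else. Stacked vectors $Z^K,S^K$ collect $Z(1),\dots,Z(K)$ and $S(1),\dots,S(K)$. Let $\tilde C_K=I_K\otimes C$, $\tilde D_K=I_K\otimes D$, $F_K=\begin{bmatrix} I & A^\top &\cdots & (A^\top)^{K-1}\end{bmatrix}^\top$, $J_K\in\mathbb{R}^{Kn_x\times(K-1)n_x}$ with $(i,j)$ block $A^{i-j-1}$ if $i>j$ ($A^0=I$) and $\mathbf{0}$ otherwise, and $Q=F_K\Sigma^X_1F_K^\top+J_K(I_{K-1}\otimes\Sigma^T)J_K^\top$.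 Then $\Sigma^S_K=\tilde D_KQ\tilde D_K^\top$ is the covariance of $S^K$, $\Sigma^{SZ}_K=\tilde G_K\tilde C_KQ\tilde D_K^\top$ is the cross-covariance of $Z^K$ and $S^K$, and $\Sigma^Z_K$ denotes the covariance of $Z^K$ (which determines the covariance of $V^K$ via $\Sigma^V_K=\Sigma^Z_K-\tilde G_K(\tilde C_KQ\tilde C_K^\top+I_K\otimes\Sigma^W)\tilde G_K^\top$). Since all vectors are jointly Gaussian, the mutual information and differential entropy (logarithms base 2) are $I[S^K;Z^K]=\tfrac12\log\det\Sigma^S_K-\tfrac12\log\det\big(\Sigma^S_K-(\Sigma^{SZ}_K)^\top(\Sigma^Z_K)^{-1}\Sigma^{SZ}_K\big)$ and $h[H]=\tfrac12\log\det\Sigma^H+\tfrac m2+\tfrac m2\log(2\pi)$; the cost is regarded as a function of $(\Sigma^H,\Sigma^Z_K,\tilde G_K)$ through these formulas. *)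

theory Defs
  imports "Jordan_Normal_Form.Determinant" "Jordan_Normal_Form.DL_Rank"
          "Jordan_Normal_Form.Gauss_Jordan_Elimination"
begin

definition sym_mat :: "nat \<Rightarrow> real mat \<Rightarrow> bool" where
  "sym_mat n M \<longleftrightarrow> M \<in> carrier_mat n n \<and> M\<^sup>T = M"

definition psd_mat :: "nat \<Rightarrow> real mat \<Rightarrow> bool" where
  "psd_mat n M \<longleftrightarrow> sym_mat n M \<and> (\<forall>v \<in> carrier_vec n. v \<bullet> (M *\<^sub>v v) \<ge> 0)"

definition pd_mat :: "nat \<Rightarrow> real mat \<Rightarrow> bool" where
  "pd_mat n M \<longleftrightarrow> sym_mat n M \<and> (\<forall>v \<in> carrier_vec n. v \<noteq> 0\<^sub>v n \<longrightarrow> v \<bullet> (M *\<^sub>v v) > 0)"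

text \<open>Inverse of a square matrix (only used for invertible matrices).\<close>
definition inv_mat :: "real mat \<Rightarrow> real mat" where
  "inv_mat M = the (mat_inverse M)"

definition blockdiag :: "nat \<Rightarrow> nat \<Rightarrow> (nat \<Rightarrow> real mat) \<Rightarrow> real mat" where
  "blockdiag K n M = mat (K * n) (K * n)
     (\<lambda>(i, j). if i div n = j div n then M (i div n) $$ (i mod n, j mod n) else 0)"

definition kron_id :: "nat \<Rightarrow> real mat \<Rightarrow> real mat" where
  "kron_id K M = mat (K * dim_row M) (K * dim_col M)
     (\<lambda>(i, j). if i div dim_row M = j div dim_col M
               then M $$ (i mod dim_row M, j mod dim_col M) else 0)"

definition F_mat :: "nat \<Rightarrow> nat \<Rightarrow> real mat \<Rightarrow> real mat" where
  "F_mat K nx A = mat (K * nx) nx (\<lambda>(i, j). (A ^\<^sub>m (i div nx)) $$ (i mod nx, j))"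

text \<open>J_K of size (K nx) x ((K-1) nx), block (i,j) = A^(i-j-1) if i > j, else 0
  (block indices counted from 0; the same condition as with indices from 1).\<close>
definition J_mat :: "nat \<Rightarrow> nat \<Rightarrow> real mat \<Rightarrow> real mat" where
  "J_mat K nx A = mat (K * nx) ((K - 1) * nx)
     (\<lambda>(i, j). if i div nx > j div nx
               then (A ^\<^sub>m (i div nx - j div nx - 1)) $$ (i mod nx, j mod nx) else 0)"

definition Q_mat :: "nat \<Rightarrow> nat \<Rightarrow> real mat \<Rightarrow> real mat \<Rightarrow> real mat \<Rightarrow> real mat" where
  "Q_mat K nx A Sig1 SigT =
     F_mat K nx A * Sig1 * (F_mat K nx A)\<^sup>T
     + J_mat K nx A * kron_id (K - 1) SigT * (J_mat K nx A)\<^sup>T"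

definition SigS :: "nat \<Rightarrow> nat \<Rightarrow> real mat \<Rightarrow> real mat \<Rightarrow> real mat \<Rightarrow> real mat \<Rightarrow> real mat" where
  "SigS K nx A D Sig1 SigT = kron_id K D * Q_mat K nx A Sig1 SigT * (kron_id K D)\<^sup>T"

text \<open>\<Sigma>^SZ_K = G~ C~ Q D~^T, where G~ = diag(G(1),...,G(K)) (here G 0, ..., G (K-1)).\<close>
definition SigSZ :: "nat \<Rightarrow> nat \<Rightarrow> nat \<Rightarrow> real mat \<Rightarrow> real mat \<Rightarrow> real mat \<Rightarrow> real mat
    \<Rightarrow> real mat \<Rightarrow> (nat \<Rightarrow> real mat) \<Rightarrow> real mat" where
  "SigSZ K nx ny A C D Sig1 SigT G =
     blockdiag K ny G * kron_id K C * Q_mat K nx A Sig1 SigT * (kron_id K D)\<^sup>T"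

definition SigS_cond :: "nat \<Rightarrow> nat \<Rightarrow> nat \<Rightarrow> real mat \<Rightarrow> real mat \<Rightarrow> real mat \<Rightarrow> real mat
    \<Rightarrow> real mat \<Rightarrow> real mat \<Rightarrow> (nat \<Rightarrow> real mat) \<Rightarrow> real mat" where
  "SigS_cond K nx ny A C D Sig1 SigT SigZ G =
     SigS K nx A D Sig1 SigT
     - (SigSZ K nx ny A C D Sig1 SigT G)\<^sup>T * inv_mat SigZ * SigSZ K nx ny A C D Sig1 SigT G"

definition mutual_info :: "nat \<Rightarrow> nat \<Rightarrow> nat \<Rightarrow> real mat \<Rightarrow> real mat \<Rightarrow> real mat \<Rightarrow> real mat
    \<Rightarrow> real mat \<Rightarrow> real mat \<Rightarrow> (nat \<Rightarrow> real mat) \<Rightarrow> real" where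
  "mutual_info K nx ny A C D Sig1 SigT SigZ G =
     1/2 * log 2 (det (SigS K nx A D Sig1 SigT))
     - 1/2 * log 2 (det (SigS_cond K nx ny A C D Sig1 SigT SigZ G))"

text \<open>Differential entropy h[H] of H ~ N(0, SigH), H in R^m (base-2 logarithms).\<close>
definition diff_entropy :: "nat \<Rightarrow> real mat \<Rightarrow> real" where
  "diff_entropy m SigH = 1/2 * log 2 (det SigH) + real m / 2 + real m / 2 * log 2 (2 * pi)"

definition cost :: "nat \<Rightarrow> nat \<Rightarrow> nat \<Rightarrow> nat \<Rightarrow> real mat \<Rightarrow> real mat \<Rightarrow> real mat \<Rightarrow> real mat
    \<Rightarrow> real mat \<Rightarrow> real mat \<Rightarrow> real mat \<Rightarrow> (nat \<Rightarrow> real mat) \<Rightarrow> real" where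
  "cost K nx ny m A C D Sig1 SigT SigH SigZ G =
     mutual_info K nx ny A C D Sig1 SigT SigZ G - diff_entropy m SigH"

text \<open>Feasible set of the original problem: \<Sigma>^H > 0, \<Sigma>^Z_K > 0, G~ block diagonal with
  ny x ny blocks, and (domain of the cost formula) the conditional covariance
  \<Sigma>^S_K - (\<Sigma>^SZ_K)^T (\<Sigma>^Z_K)^{-1} \<Sigma>^SZ_K positive definite.\<close>
definition orig_feasible :: "nat \<Rightarrow> nat \<Rightarrow> nat \<Rightarrow> nat \<Rightarrow> nat \<Rightarrow> real mat \<Rightarrow> real mat \<Rightarrow> real mat
    \<Rightarrow> real mat \<Rightarrow> real mat \<Rightarrow> real mat \<Rightarrow> real mat \<Rightarrow> (nat \<Rightarrow> real mat) \<Rightarrow> bool" where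
  "orig_feasible K nx ny ns m A C D Sig1 SigT SigH SigZ G \<longleftrightarrow>
     pd_mat m SigH \<and> pd_mat (K * ny) SigZ \<and> (\<forall>k < K. G k \<in> carrier_mat ny ny) \<and>
     pd_mat (K * ns) (SigS_cond K nx ny A C D Sig1 SigT SigZ G)"

definition conv_obj :: "real mat \<Rightarrow> real mat \<Rightarrow> real" where
  "conv_obj SigH PiK = - log 2 (det SigH) - log 2 (det PiK)"

text \<open>Feasible set of the convex program: \<Sigma>^H > 0, \<Sigma>^Z_K > 0, G~ block diagonal,
  \<Pi>_K symmetric with \<Pi>_K \<ge> 0, the LMI, and det \<Pi>_K > 0 (domain of -log det \<Pi>_K).\<close>
definition conv_feasible :: "nat \<Rightarrow> nat \<Rightarrow> nat \<Rightarrow> nat \<Rightarrow> nat \<Rightarrow> real mat \<Rightarrow> real mat \<Rightarrow> real mat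
    \<Rightarrow> real mat \<Rightarrow> real mat \<Rightarrow> real mat \<Rightarrow> real mat \<Rightarrow> real mat \<Rightarrow> (nat \<Rightarrow> real mat) \<Rightarrow> bool" where
  "conv_feasible K nx ny ns m A C D Sig1 SigT SigH PiK SigZ G \<longleftrightarrow>
     pd_mat m SigH \<and> pd_mat (K * ny) SigZ \<and> (\<forall>k < K. G k \<in> carrier_mat ny ny) \<and>
     psd_mat (K * ns) PiK \<and> det PiK > 0 \<and>
     psd_mat (K * ns + K * ny)
       (four_block_mat (SigS K nx A D Sig1 SigT - PiK) (SigSZ K nx ny A C D Sig1 SigT G)\<^sup>T
                       (SigSZ K nx ny A C D Sig1 SigT G) SigZ)"

end

theory Submission
  imports Defs
begin

(* Let P = Sigma^S_K - (Sigma^SZ_K)^T (Sigma^Z_K)^-1 Sigma^SZ_K be the conditional covariance. The cost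
   is (1/2) log det Sigma^S_K - (1/2) log det P - h[H], an increasing affine function of the convex
   objective evaluated at Pi_K = P. By the Schur complement lemma the LMI holds exactly when
   Pi_K <= P in the Loewner order, and det is monotone for this order on positive definite
   matrices (induction on the dimension: split off the last coordinate and use the Schur
   determinant formula det M = det (Schur complement) * m_nn). So for fixed (Sigma^H, Sigma^Z_K, G)
   the best Pi_K is P itself; feasible points of the two problems correspond, and so do their
   minimisers. *)

section \<open>Quadratic forms and symmetric block matrices\<close>

definition quad_form :: "'a :: semiring_0 mat \<Rightarrow> 'a vec \<Rightarrow> 'a" where
  "quad_form M v = v \<bullet> (M *\<^sub>v v)"

lemma psd_mat_quad_form_iff:
  "psd_mat n M \<longleftrightarrow> sym_mat n M \<and> (\<forall>v \<in> carrier_vec n. 0 \<le> quad_form M v)"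
  unfolding psd_mat_def quad_form_def by simp

lemma pd_mat_quad_form_iff:
  "pd_mat n M \<longleftrightarrow> sym_mat n M \<and> (\<forall>v \<in> carrier_vec n. v \<noteq> 0\<^sub>v n \<longrightarrow> 0 < quad_form M v)"
  unfolding pd_mat_def quad_form_def by simp

lemma quad_form_zero [simp]: "M \<in> carrier_mat n n \<Longrightarrow> quad_form M (0\<^sub>v n) = 0"
  unfolding quad_form_def by simp

lemma quad_form_diff:
  fixes A B :: "'a :: ring mat"
  assumes "A \<in> carrier_mat n n" "B \<in> carrier_mat n n" "v \<in> carrier_vec n"
  shows "quad_form (A - B) v = quad_form A v - quad_form B v"
  unfolding quad_form_def using assms
  by (simp add: minus_mult_distrib_mat_vec scalar_prod_minus_distrib[of _ n])

lemma scalar_prod_transpose: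
  fixes B :: "'a :: comm_semiring_0 mat"
  assumes "B \<in> carrier_mat k n" "v \<in> carrier_vec n" "w \<in> carrier_vec k"
  shows "v \<bullet> (B\<^sup>T *\<^sub>v w) = w \<bullet> (B *\<^sub>v v)"
  using transpose_vec_mult_scalar[OF assms] comm_scalar_prod[of v n "B\<^sup>T *\<^sub>v w"] assms by simp

lemma quad_form_congruence:
  fixes B M :: "'a :: comm_semiring_0 mat"
  assumes B: "B \<in> carrier_mat k n" and M: "M \<in> carrier_mat k k" and v: "v \<in> carrier_vec n"
  shows "quad_form (B\<^sup>T * M * B) v = quad_form M (B *\<^sub>v v)"
proof -
  have "(B\<^sup>T * M * B) *\<^sub>v v = (B\<^sup>T * M) *\<^sub>v (B *\<^sub>v v)"
    using B M v by (intro assoc_mult_mat_vec[of _ n k]) auto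
  also have "\<dots> = B\<^sup>T *\<^sub>v (M *\<^sub>v (B *\<^sub>v v))"
    using B M v by (intro assoc_mult_mat_vec[of _ n k]) auto
  finally have "(B\<^sup>T * M * B) *\<^sub>v v = B\<^sup>T *\<^sub>v (M *\<^sub>v (B *\<^sub>v v))" .
  then show ?thesis
    unfolding quad_form_def using scalar_prod_transpose[OF B v, of "M *\<^sub>v (B *\<^sub>v v)"] B M v
      comm_scalar_prod[of "M *\<^sub>v (B *\<^sub>v v)" k "B *\<^sub>v v"] by simp
qed

lemma quad_form_add_sym:
  fixes Z :: "'a :: comm_ring_1 mat"
  assumes Z: "Z \<in> carrier_mat k k" "Z\<^sup>T = Z" and w: "w \<in> carrier_vec k" and u: "u \<in> carrier_vec k"
  shows "quad_form Z (w + u) = quad_form Z w + 2 * (w \<bullet> (Z *\<^sub>v u)) + quad_form Z u"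
proof -
  have "u \<bullet> (Z *\<^sub>v w) = w \<bullet> (Z *\<^sub>v u)"
    using scalar_prod_transpose[OF Z(1) u w] Z by simp
  then show ?thesis
    unfolding quad_form_def using Z w u
    by (simp add: mult_add_distrib_mat_vec[of _ k k] add_scalar_prod_distrib[of _ k]
        scalar_prod_add_distrib[of _ k])
qed

lemma quad_form_four_block:
  fixes X B Z :: "'a :: comm_ring_1 mat"
  assumes X: "X \<in> carrier_mat n n" and B: "B \<in> carrier_mat k n" and Z: "Z \<in> carrier_mat k k"
    and v: "v \<in> carrier_vec n" and w: "w \<in> carrier_vec k"
  shows "quad_form (four_block_mat X B\<^sup>T B Z) (v @\<^sub>v w)
    = quad_form X v + 2 * (w \<bullet> (B *\<^sub>v v)) + quad_form Z w"
proof -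
  have "four_block_mat X B\<^sup>T B Z *\<^sub>v (v @\<^sub>v w) = (X *\<^sub>v v + B\<^sup>T *\<^sub>v w) @\<^sub>v (B *\<^sub>v v + Z *\<^sub>v w)"
    using four_block_mat_mult_vec[OF X _ B Z v w] B by simp
  then show ?thesis
    unfolding quad_form_def using X B Z v w scalar_prod_transpose[OF B v w]
    by (simp add: scalar_prod_append[of _ n _ k] scalar_prod_add_distrib[of _ n]
        scalar_prod_add_distrib[of _ k])
qed

lemma quad_form_four_block_schur:
  fixes X B Z Zi :: "'a :: comm_ring_1 mat"
  assumes X: "X \<in> carrier_mat n n" and B: "B \<in> carrier_mat k n" and Z: "Z \<in> carrier_mat k k"
    and Zs: "Z\<^sup>T = Z" and Zi: "Zi \<in> carrier_mat k k" and ZZi: "Z * Zi = 1\<^sub>m k"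
    and v: "v \<in> carrier_vec n" and w: "w \<in> carrier_vec k"
  shows "quad_form (four_block_mat X B\<^sup>T B Z) (v @\<^sub>v w)
    = quad_form (X - B\<^sup>T * Zi * B) v + quad_form Z (w + Zi *\<^sub>v (B *\<^sub>v v))"
proof -
  define u where "u = Zi *\<^sub>v (B *\<^sub>v v)"
  have Bv: "B *\<^sub>v v \<in> carrier_vec k" and u: "u \<in> carrier_vec k" using B Zi v by (auto simp: u_def)
  have Zu: "Z *\<^sub>v u = B *\<^sub>v v"
    using assoc_mult_mat_vec[OF Z Zi Bv, symmetric] ZZi Bv by (simp add: u_def)
  have "quad_form Z u = quad_form Zi (B *\<^sub>v v)"
    unfolding quad_form_def Zu using comm_scalar_prod[OF u Bv] by (simp add: u_def)
  then show ?thesis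
    using quad_form_four_block[OF X B Z v w] quad_form_add_sym[OF Z Zs w u] Zu
      quad_form_diff[OF X _ v, of "B\<^sup>T * Zi * B"] quad_form_congruence[OF B Zi v] B Zi
    by (simp add: u_def)
qed

lemma quad_form_four_block_zero_left:
  fixes X B Z :: "'a :: comm_ring_1 mat"
  assumes "X \<in> carrier_mat n n" "B \<in> carrier_mat k n" "Z \<in> carrier_mat k k" "w \<in> carrier_vec k"
  shows "quad_form (four_block_mat X B\<^sup>T B Z) (0\<^sub>v n @\<^sub>v w) = quad_form Z w"
proof -
  have "B *\<^sub>v 0\<^sub>v n = 0\<^sub>v k" using assms(2) by auto
  then show ?thesis using quad_form_four_block[OF assms(1-3) _ assms(4), of "0\<^sub>v n"] assms by simp
qed

lemma quad_form_schur_complement: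
  fixes X B Z Zi :: "'a :: comm_ring_1 mat"
  assumes X: "X \<in> carrier_mat n n" and B: "B \<in> carrier_mat k n" and Z: "Z \<in> carrier_mat k k"
    and Zs: "Z\<^sup>T = Z" and Zi: "Zi \<in> carrier_mat k k" and ZZi: "Z * Zi = 1\<^sub>m k"
    and v: "v \<in> carrier_vec n"
  shows "quad_form (X - B\<^sup>T * Zi * B) v
    = quad_form (four_block_mat X B\<^sup>T B Z) (v @\<^sub>v - (Zi *\<^sub>v (B *\<^sub>v v)))"
proof -
  have cancel: "- (Zi *\<^sub>v (B *\<^sub>v v)) + Zi *\<^sub>v (B *\<^sub>v v) = 0\<^sub>v k" using Zi B v by simp
  show ?thesis
    using quad_form_four_block_schur[OF X B Z Zs Zi ZZi v, of "- (Zi *\<^sub>v (B *\<^sub>v v))",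
        unfolded cancel] Z Zi B v
    by simp
qed

lemma quad_form_unit_vec:
  fixes M :: "'a :: comm_ring_1 mat"
  assumes "M \<in> carrier_mat n n" "i < n"
  shows "quad_form M (unit_vec n i) = M $$ (i, i)"
  unfolding quad_form_def using assms by simp

lemma append_vec_eq_zero_iff:
  assumes "v \<in> carrier_vec n"
  shows "v @\<^sub>v w = 0\<^sub>v (n + k) \<longleftrightarrow> v = 0\<^sub>v n \<and> w = 0\<^sub>v k"
proof -
  have "0\<^sub>v (n + k) = 0\<^sub>v n @\<^sub>v (0\<^sub>v k :: 'a vec)" by (rule eq_vecI) auto
  then show ?thesis using append_vec_eq[OF assms] by simp
qed

lemma transpose_congruence:
  fixes B M :: "'a :: comm_semiring_0 mat"
  assumes B: "B \<in> carrier_mat k n" and M: "M \<in> carrier_mat k k" and Ms: "M\<^sup>T = M"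
  shows "(B\<^sup>T * M * B)\<^sup>T = B\<^sup>T * M * B"
  using transpose_mult[of "B\<^sup>T * M" n k B n] transpose_mult[of "B\<^sup>T" n k M k] B M Ms
  by (simp add: assoc_mult_mat[of _ n k _ k _ n])

lemma sym_mat_four_block_iff:
  assumes X: "X \<in> carrier_mat n n" and B: "B \<in> carrier_mat k n" and Z: "Z \<in> carrier_mat k k"
  shows "sym_mat (n + k) (four_block_mat X B\<^sup>T B Z) \<longleftrightarrow> X\<^sup>T = X \<and> Z\<^sup>T = Z"
proof -
  have T: "(four_block_mat X B\<^sup>T B Z)\<^sup>T = four_block_mat X\<^sup>T B\<^sup>T B Z\<^sup>T"
    using transpose_four_block_mat[OF X _ B Z] B by simp
  have "four_block_mat X\<^sup>T B\<^sup>T B Z\<^sup>T = four_block_mat X B\<^sup>T B Z \<longleftrightarrow> X\<^sup>T = X \<and> Z\<^sup>T = Z"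
  proof
    assume e: "four_block_mat X\<^sup>T B\<^sup>T B Z\<^sup>T = four_block_mat X B\<^sup>T B Z"
    have "X\<^sup>T $$ (i, j) = X $$ (i, j)" if "i < n" "j < n" for i j
      using arg_cong[OF e, of "\<lambda>M. M $$ (i, j)"] that X B Z by simp
    moreover have "Z\<^sup>T $$ (i, j) = Z $$ (i, j)" if "i < k" "j < k" for i j
      using arg_cong[OF e, of "\<lambda>M. M $$ (i + n, j + n)"] that X B Z by simp
    ultimately show "X\<^sup>T = X \<and> Z\<^sup>T = Z" using X Z by auto
  qed simp
  then show ?thesis unfolding sym_mat_def T using X B Z by auto
qed

lemma sym_mat_four_block_split:
  assumes "sym_mat (n + k) A"
  obtains X B Z where "X \<in> carrier_mat n n" "B \<in> carrier_mat k n" "Z \<in> carrier_mat k k"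
    "A = four_block_mat X B\<^sup>T B Z"
proof -
  obtain X Y B Z where sp: "split_block A n n = (X, Y, B, Z)" by (metis prod_cases4)
  have A: "A \<in> carrier_mat (n + k) (n + k)" "A\<^sup>T = A" using assms unfolding sym_mat_def by auto
  note blocks = split_block[OF sp, of k k]
  have "Y = B\<^sup>T"
  proof (rule eq_matI)
    fix i j assume "i < dim_row B\<^sup>T" "j < dim_col B\<^sup>T"
    then show "Y $$ (i, j) = B\<^sup>T $$ (i, j)"
      using sp arg_cong[OF A(2), of "\<lambda>M. M $$ (j + n, i)"] A(1)
      unfolding split_block_def Let_def by auto
  qed (use sp A(1) in \<open>auto simp: split_block_def Let_def\<close>)
  then show thesis using that blocks A(1) by auto
qed

lemma det_four_block_schur:
  fixes X B Z Zi :: "'a :: idom mat"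
  assumes X: "X \<in> carrier_mat n n" and B: "B \<in> carrier_mat k n" and Z: "Z \<in> carrier_mat k k"
    and Zi: "Zi \<in> carrier_mat k k" and ZZi: "Z * Zi = 1\<^sub>m k"
  shows "det (four_block_mat X B\<^sup>T B Z) = det (X - B\<^sup>T * Zi * B) * det Z"
proof -
  define N where "N = four_block_mat (1\<^sub>m n) (0\<^sub>m n k) (- (Zi * B)) (1\<^sub>m k)"
  have BT: "B\<^sup>T \<in> carrier_mat n k" and ZiB: "Zi * B \<in> carrier_mat k n" using B Zi by auto
  have M: "four_block_mat X B\<^sup>T B Z \<in> carrier_mat (n + k) (n + k)" using X Z BT B by auto
  have Nc: "N \<in> carrier_mat (n + k) (n + k)" unfolding N_def using ZiB by auto
  have dN: "det N = 1" unfolding N_def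
    by (subst det_four_block_mat_upper_right_zero[of _ n _ k]) (use ZiB in auto)
  have "Z * (Zi * B) = B" using assoc_mult_mat[OF Z Zi B, symmetric] ZZi B by simp
  then have "Z * - (Zi * B) = - B" using Z Zi B by simp
  then have e1: "B * 1\<^sub>m n + Z * - (Zi * B) = 0\<^sub>m k n"
    using B by (simp add: add_uminus_minus_mat[of _ k n])
  have e2: "X * 1\<^sub>m n + B\<^sup>T * - (Zi * B) = X - B\<^sup>T * Zi * B"
    using X BT Zi B ZiB by (simp add: add_uminus_minus_mat[of _ n n] assoc_mult_mat[of _ n k _ k _ n])
  have e3: "X * 0\<^sub>m n k + B\<^sup>T * 1\<^sub>m k = B\<^sup>T" and e4: "B * 0\<^sub>m n k + Z * 1\<^sub>m k = Z"
    using X BT B Z by simp_all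
  have prod: "four_block_mat X B\<^sup>T B Z * N = four_block_mat (X - B\<^sup>T * Zi * B) B\<^sup>T (0\<^sub>m k n) Z"
    unfolding N_def
    by (subst mult_four_block_mat[OF X BT B Z _ _ _ _]) (use ZiB in \<open>auto simp: e1 e2 e3 e4\<close>)
  have "det (four_block_mat X B\<^sup>T B Z) = det (four_block_mat X B\<^sup>T B Z * N)"
    using det_mult[OF M Nc] dN by simp
  also have "\<dots> = det (X - B\<^sup>T * Zi * B) * det Z" unfolding prod
    by (rule det_four_block_mat_lower_left_zero[of _ n _ k]) (use X BT Zi B Z in auto)
  finally show ?thesis .
qed

lemma pd_mat_det_nonzero:
  assumes "pd_mat n M"
  shows "det M \<noteq> 0"
proof
  assume "det M = 0"
  moreover have M: "M \<in> carrier_mat n n" using assms unfolding pd_mat_def sym_mat_def by simp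
  ultimately obtain v where "v \<in> carrier_vec n" "v \<noteq> 0\<^sub>v n" "M *\<^sub>v v = 0\<^sub>v n"
    using det_0_iff_vec_prod_zero_field[OF M] by auto
  then show False using assms unfolding pd_mat_def by fastforce
qed

lemma pd_mat_inverse:
  assumes P: "pd_mat n M"
  shows "inv_mat M \<in> carrier_mat n n" "M * inv_mat M = 1\<^sub>m n" "(inv_mat M)\<^sup>T = inv_mat M"
proof -
  have M: "M \<in> carrier_mat n n" and Ms: "M\<^sup>T = M" using P unfolding pd_mat_def sym_mat_def by auto
  have "M \<in> Units (ring_mat TYPE(real) n n)"
    using det_non_zero_imp_unit[OF M pd_mat_det_nonzero[OF P]] .
  then obtain Mi where Mi: "mat_inverse M = Some Mi" using mat_inverse(1)[OF M, of n] by fastforce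
  have I: "M * Mi = 1\<^sub>m n" "Mi * M = 1\<^sub>m n" "Mi \<in> carrier_mat n n"
    using mat_inverse(2)[OF M Mi] by auto
  have "Mi\<^sup>T * M = 1\<^sub>m n" using transpose_mult[OF M I(3)] I Ms by (metis transpose_one)
  then have "Mi\<^sup>T = Mi"
    using assoc_mult_mat[of "Mi\<^sup>T" n n M n Mi n] I M by simp
  then show "inv_mat M \<in> carrier_mat n n" "M * inv_mat M = 1\<^sub>m n" "(inv_mat M)\<^sup>T = inv_mat M"
    unfolding inv_mat_def Mi using I by simp_all
qed

lemma pd_mat_imp_psd_mat:
  assumes "pd_mat n M"
  shows "psd_mat n M"
proof -
  have "0 \<le> quad_form M v" if "v \<in> carrier_vec n" for v
    using assms that unfolding pd_mat_quad_form_iff sym_mat_def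
    by (cases "v = 0\<^sub>v n") (auto simp: less_imp_le)
  then show ?thesis using assms unfolding pd_mat_quad_form_iff psd_mat_quad_form_iff by simp
qed

lemma pd_mat_mono:
  assumes "pd_mat n B" "sym_mat n A" "\<And>v. v \<in> carrier_vec n \<Longrightarrow> quad_form B v \<le> quad_form A v"
  shows "pd_mat n A"
  using assms unfolding pd_mat_quad_form_iff by (meson less_le_trans)

lemma nonneg_quadratic_imp_linear_coeff_zero:
  fixes a b :: real
  assumes "\<And>t. 0 \<le> b * t + a * t\<^sup>2"
  shows "b = 0"
proof -
  define s where "s = \<bar>a\<bar> + 1"
  have s: "0 < s" "a - s \<le> -1" unfolding s_def by auto
  have "0 \<le> (b * (- b / s) + a * (- b / s)\<^sup>2) * s\<^sup>2" using assms[of "- b / s"] by simp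
  also have "\<dots> = b\<^sup>2 * (a - s)" using s(1) by (simp add: field_simps power2_eq_square)
  also have "\<dots> \<le> b\<^sup>2 * (-1)" using s(2) by (intro mult_left_mono) auto
  finally show ?thesis by simp
qed

lemma scalar_prod_self_eq_zero_iff:
  fixes v :: "real vec"
  shows "v \<bullet> v = 0 \<longleftrightarrow> v = 0\<^sub>v (dim_vec v)"
proof -
  have sq: "v \<bullet> v = (\<Sum>i < dim_vec v. (v $ i)\<^sup>2)"
    unfolding scalar_prod_def power2_eq_square by (simp add: atLeast0LessThan)
  show ?thesis
  proof
    assume "v \<bullet> v = 0"
    then have "\<forall>i < dim_vec v. (v $ i)\<^sup>2 = 0" unfolding sq by (simp add: sum_nonneg_eq_0_iff)
    then show "v = 0\<^sub>v (dim_vec v)" by (intro eq_vecI) auto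
  qed (metis carrier_vec_dim_vec scalar_prod_left_zero)
qed

text \<open>Along \<open>v + t M v\<close> the form equals \<open>2 t |M v|\<^sup>2 + t\<^sup>2 (M v)\<^sup>T M (M v)\<close>, which is
  nonnegative for all \<open>t\<close> only if \<open>M v = 0\<close>.\<close>
lemma psd_mat_quad_form_eq_zero:
  assumes P: "psd_mat n M" and v: "v \<in> carrier_vec n" and q0: "quad_form M v = 0"
  shows "M *\<^sub>v v = 0\<^sub>v n"
proof -
  have M: "M \<in> carrier_mat n n" "M\<^sup>T = M" using P unfolding psd_mat_def sym_mat_def by auto
  define w where "w = M *\<^sub>v v"
  have w: "w \<in> carrier_vec n" using M v by (simp add: w_def)
  have vw: "v \<bullet> (M *\<^sub>v w) = w \<bullet> w" using scalar_prod_transpose[OF M(1) v w] M(2) by (simp add: w_def)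
  have "0 \<le> 2 * (w \<bullet> w) * t + quad_form M w * t\<^sup>2" for t
  proof -
    have "0 \<le> quad_form M (v + t \<cdot>\<^sub>v w)"
      using P v w unfolding psd_mat_quad_form_iff by simp
    also have "\<dots> = 2 * (w \<bullet> w) * t + quad_form M w * t\<^sup>2"
    proof -
      have "v \<bullet> (t \<cdot>\<^sub>v (M *\<^sub>v w)) = t * (w \<bullet> w)" using vw v M(1) w by simp
      then show ?thesis
        using quad_form_add_sym[OF M v smult_carrier_vec[THEN iffD2, OF w]] q0 M(1) w
        by (simp add: quad_form_def mult_mat_vec power2_eq_square)
    qed
    finally show ?thesis .
  qed
  then have "w \<bullet> w = 0" using nonneg_quadratic_imp_linear_coeff_zero by fastforce
  then show ?thesis using scalar_prod_self_eq_zero_iff[of w] M(1) by (simp add: w_def)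
qed

lemma psd_mat_det_nonzero_imp_pd_mat:
  assumes P: "psd_mat n M" and d: "det M \<noteq> 0"
  shows "pd_mat n M"
proof -
  have M: "M \<in> carrier_mat n n" using P unfolding psd_mat_def sym_mat_def by simp
  have "0 < quad_form M v" if v: "v \<in> carrier_vec n" "v \<noteq> 0\<^sub>v n" for v
  proof (rule ccontr)
    assume "\<not> 0 < quad_form M v"
    then have "quad_form M v = 0" using P v unfolding psd_mat_quad_form_iff by force
    then have "M *\<^sub>v v = 0\<^sub>v n" using psd_mat_quad_form_eq_zero[OF P v(1)] by simp
    then show False using det_0_iff_vec_prod_zero_field[OF M] v d by auto
  qed
  then show ?thesis using P unfolding pd_mat_quad_form_iff psd_mat_quad_form_iff by simp
qed

section \<open>Schur complements\<close>

lemma sym_mat_schur_complement: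
  fixes X B Z :: "real mat"
  assumes X: "sym_mat n X" and B: "B \<in> carrier_mat k n" and Z: "pd_mat k Z"
  shows "sym_mat n (X - B\<^sup>T * inv_mat Z * B)"
  using X B transpose_minus[of X n n "B\<^sup>T * inv_mat Z * B"]
    transpose_congruence[OF B pd_mat_inverse(1,3)[OF Z]] pd_mat_inverse(1)[OF Z]
  unfolding sym_mat_def by auto

lemma psd_four_block_iff_schur:
  fixes X B Z :: "real mat"
  assumes X: "sym_mat n X" and B: "B \<in> carrier_mat k n" and Z: "pd_mat k Z"
  shows "psd_mat (n + k) (four_block_mat X B\<^sup>T B Z) \<longleftrightarrow> psd_mat n (X - B\<^sup>T * inv_mat Z * B)"
proof -
  have Xc: "X \<in> carrier_mat n n" and Zc: "Z \<in> carrier_mat k k" "Z\<^sup>T = Z"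
    using X Z unfolding sym_mat_def pd_mat_def by auto
  note Zi = pd_mat_inverse[OF Z]
  have sym: "sym_mat (n + k) (four_block_mat X B\<^sup>T B Z)"
    using sym_mat_four_block_iff[OF Xc B Zc(1)] X Zc(2) unfolding sym_mat_def by simp
  have Z_nonneg: "0 \<le> quad_form Z w" if "w \<in> carrier_vec k" for w
    using pd_mat_imp_psd_mat[OF Z] that unfolding psd_mat_quad_form_iff by simp
  have "(\<forall>x \<in> carrier_vec (n + k). 0 \<le> quad_form (four_block_mat X B\<^sup>T B Z) x)
    \<longleftrightarrow> (\<forall>v \<in> carrier_vec n. 0 \<le> quad_form (X - B\<^sup>T * inv_mat Z * B) v)"
  proof safe
    fix v :: "real vec" assume v: "v \<in> carrier_vec n"
      and "\<forall>x \<in> carrier_vec (n + k). 0 \<le> quad_form (four_block_mat X B\<^sup>T B Z) x"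
    then show "0 \<le> quad_form (X - B\<^sup>T * inv_mat Z * B) v"
      using quad_form_schur_complement[OF Xc B Zc Zi(1,2) v] Zi(1) B by simp
  next
    fix x :: "real vec" assume x: "x \<in> carrier_vec (n + k)"
      and "\<forall>v \<in> carrier_vec n. 0 \<le> quad_form (X - B\<^sup>T * inv_mat Z * B) v"
    then show "0 \<le> quad_form (four_block_mat X B\<^sup>T B Z) x"
      using quad_form_four_block_schur[OF Xc B Zc Zi(1,2), of "vec_first x n" "vec_last x k"]
        Z_nonneg[of "vec_last x k + inv_mat Z *\<^sub>v (B *\<^sub>v vec_first x n)"] Zi(1) B
      by simp
  qed
  then show ?thesis
    unfolding psd_mat_quad_form_iff using sym sym_mat_schur_complement[OF X B Z] by simp
qed

lemma psd_four_block_congruence: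
  fixes T Z :: "real mat"
  assumes T: "T \<in> carrier_mat k n" and Z: "pd_mat k Z"
  shows "psd_mat (n + k) (four_block_mat (T\<^sup>T * inv_mat Z * T) T\<^sup>T T Z)"
proof -
  note Zi = pd_mat_inverse[OF Z]
  have W: "T\<^sup>T * inv_mat Z * T \<in> carrier_mat n n" using T Zi(1) by auto
  have "sym_mat n (T\<^sup>T * inv_mat Z * T)"
    using transpose_congruence[OF T Zi(1,3)] W unfolding sym_mat_def by simp
  moreover have "psd_mat n (0\<^sub>m n n)"
    unfolding psd_mat_def sym_mat_def by (auto simp: scalar_prod_def mult_mat_vec_def)
  ultimately show ?thesis using psd_four_block_iff_schur[OF _ T Z] W by simp
qed

lemma psd_four_block_imp_le_schur_complement:
  fixes S T Z Pi :: "real mat"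
  assumes S: "S \<in> carrier_mat n n" and T: "T \<in> carrier_mat k n" and Z: "pd_mat k Z"
    and Pi: "sym_mat n Pi" and L: "psd_mat (n + k) (four_block_mat (S - Pi) T\<^sup>T T Z)"
  shows "sym_mat n (S - T\<^sup>T * inv_mat Z * T)"
    and "\<And>v. v \<in> carrier_vec n \<Longrightarrow> quad_form Pi v \<le> quad_form (S - T\<^sup>T * inv_mat Z * T) v"
proof -
  note Zi = pd_mat_inverse[OF Z]
  have Pic: "Pi \<in> carrier_mat n n" "Pi\<^sup>T = Pi" using Pi unfolding sym_mat_def by auto
  have SPi: "S - Pi \<in> carrier_mat n n" using Pic(1) by (rule minus_carrier_mat)
  have W: "T\<^sup>T * inv_mat Z * T \<in> carrier_mat n n" using T Zi(1) by auto
  have SPi_sym: "sym_mat n (S - Pi)"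
    using L sym_mat_four_block_iff[OF SPi T] Z SPi unfolding psd_mat_def pd_mat_def sym_mat_def by simp
  have "S\<^sup>T $$ (i, j) = S $$ (i, j)" if ij: "i < n" "j < n" for i j
  proof -
    have "(S - Pi)\<^sup>T $$ (i, j) = (S - Pi) $$ (i, j)" using SPi_sym unfolding sym_mat_def by simp
    moreover have "Pi $$ (j, i) = Pi $$ (i, j)"
      using arg_cong[OF Pic(2), of "\<lambda>M. M $$ (i, j)"] ij Pic(1) by simp
    ultimately show ?thesis using ij S Pic(1) by simp
  qed
  then have "sym_mat n S" using S unfolding sym_mat_def by auto
  then show "sym_mat n (S - T\<^sup>T * inv_mat Z * T)" by (rule sym_mat_schur_complement[OF _ T Z])
  fix v :: "real vec" assume v: "v \<in> carrier_vec n"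
  have "0 \<le> quad_form (S - Pi - T\<^sup>T * inv_mat Z * T) v"
    using psd_four_block_iff_schur[OF SPi_sym T Z] L v unfolding psd_mat_quad_form_iff by simp
  then show "quad_form Pi v \<le> quad_form (S - T\<^sup>T * inv_mat Z * T) v"
    using quad_form_diff[OF SPi W v] quad_form_diff[OF S Pic(1) v] quad_form_diff[OF S W v] by simp
qed

lemma pd_mat_four_block_lower_right:
  fixes X B Z :: "real mat"
  assumes X: "X \<in> carrier_mat n n" and B: "B \<in> carrier_mat k n" and Z: "Z \<in> carrier_mat k k"
    and P: "pd_mat (n + k) (four_block_mat X B\<^sup>T B Z)"
  shows "pd_mat k Z"
proof -
  have "0 < quad_form Z w" if w: "w \<in> carrier_vec k" "w \<noteq> 0\<^sub>v k" for w
  proof -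
    have "0\<^sub>v n @\<^sub>v w \<in> carrier_vec (n + k)" "0\<^sub>v n @\<^sub>v w \<noteq> 0\<^sub>v (n + k)"
      using w append_vec_eq_zero_iff[of "0\<^sub>v n" n w k] by auto
    then show ?thesis
      using P quad_form_four_block_zero_left[OF X B Z w(1)] unfolding pd_mat_quad_form_iff by auto
  qed
  then show ?thesis
    using P sym_mat_four_block_iff[OF X B Z] Z unfolding pd_mat_quad_form_iff sym_mat_def by simp
qed

lemma pd_schur_complement:
  fixes X B Z :: "real mat"
  assumes X: "X \<in> carrier_mat n n" and B: "B \<in> carrier_mat k n" and Z: "pd_mat k Z"
    and P: "pd_mat (n + k) (four_block_mat X B\<^sup>T B Z)"
  shows "pd_mat n (X - B\<^sup>T * inv_mat Z * B)"
proof -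
  have Zc: "Z \<in> carrier_mat k k" "Z\<^sup>T = Z" using Z unfolding pd_mat_def sym_mat_def by auto
  note Zi = pd_mat_inverse[OF Z]
  have "sym_mat n X" using P sym_mat_four_block_iff[OF X B Zc(1)] X unfolding pd_mat_def sym_mat_def by simp
  moreover have "0 < quad_form (X - B\<^sup>T * inv_mat Z * B) v" if "v \<in> carrier_vec n" "v \<noteq> 0\<^sub>v n" for v
    using P that quad_form_schur_complement[OF X B Zc Zi(1,2) that(1)] Zi(1) B
      append_vec_eq_zero_iff[OF that(1), of "- (inv_mat Z *\<^sub>v (B *\<^sub>v v))" k]
    unfolding pd_mat_quad_form_iff by simp
  ultimately show ?thesis
    using sym_mat_schur_complement[OF _ B Z] unfolding pd_mat_quad_form_iff by simp
qed

lemma four_block_loewner_le_lower_right: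
  fixes XA RA ZA XB RB ZB :: "real mat"
  assumes "XA \<in> carrier_mat n n" "RA \<in> carrier_mat k n" "ZA \<in> carrier_mat k k"
    and "XB \<in> carrier_mat n n" "RB \<in> carrier_mat k n" "ZB \<in> carrier_mat k k"
    and le: "\<And>x. x \<in> carrier_vec (n + k) \<Longrightarrow>
      quad_form (four_block_mat XB RB\<^sup>T RB ZB) x \<le> quad_form (four_block_mat XA RA\<^sup>T RA ZA) x"
    and w: "w \<in> carrier_vec k"
  shows "quad_form ZB w \<le> quad_form ZA w"
  using le[OF append_carrier_vec[OF zero_carrier_vec w]]
    quad_form_four_block_zero_left[OF assms(1-3) w] quad_form_four_block_zero_left[OF assms(4-6) w]
  by simp

lemma schur_complement_mono:
  fixes XA RA ZA XB RB ZB :: "real mat"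
  assumes XA: "XA \<in> carrier_mat n n" and RA: "RA \<in> carrier_mat k n" and ZA: "pd_mat k ZA"
    and XB: "XB \<in> carrier_mat n n" and RB: "RB \<in> carrier_mat k n" and ZB: "pd_mat k ZB"
    and le: "\<And>x. x \<in> carrier_vec (n + k) \<Longrightarrow>
      quad_form (four_block_mat XB RB\<^sup>T RB ZB) x \<le> quad_form (four_block_mat XA RA\<^sup>T RA ZA) x"
    and v: "v \<in> carrier_vec n"
  shows "quad_form (XB - RB\<^sup>T * inv_mat ZB * RB) v \<le> quad_form (XA - RA\<^sup>T * inv_mat ZA * RA) v"
proof -
  have ZAc: "ZA \<in> carrier_mat k k" "ZA\<^sup>T = ZA" and ZBc: "ZB \<in> carrier_mat k k" "ZB\<^sup>T = ZB"
    using ZA ZB unfolding pd_mat_def sym_mat_def by auto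
  note ZAi = pd_mat_inverse[OF ZA] and ZBi = pd_mat_inverse[OF ZB]
  define w where "w = - (inv_mat ZA *\<^sub>v (RA *\<^sub>v v))"
  have w: "w \<in> carrier_vec k" using ZAi(1) RA v by (simp add: w_def)
  have "quad_form (XB - RB\<^sup>T * inv_mat ZB * RB) v \<le> quad_form (four_block_mat XB RB\<^sup>T RB ZB) (v @\<^sub>v w)"
    using quad_form_four_block_schur[OF XB RB ZBc ZBi(1,2) v w] pd_mat_imp_psd_mat[OF ZB] ZBi(1) RB v w
    unfolding psd_mat_quad_form_iff by simp
  also have "\<dots> \<le> quad_form (four_block_mat XA RA\<^sup>T RA ZA) (v @\<^sub>v w)" using le v w by simp
  also have "\<dots> = quad_form (XA - RA\<^sup>T * inv_mat ZA * RA) v"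
    unfolding w_def by (rule quad_form_schur_complement[OF XA RA ZAc ZAi(1,2) v, symmetric])
  finally show ?thesis .
qed

section \<open>Monotonicity of the determinant in the Loewner order\<close>

lemma pd_mat_1x1_det:
  assumes "pd_mat 1 Z"
  shows "det Z = quad_form Z (unit_vec 1 0)" "0 < det Z"
proof -
  have Z: "Z \<in> carrier_mat 1 1" using assms unfolding pd_mat_def sym_mat_def by simp
  show "det Z = quad_form Z (unit_vec 1 0)" using det_single[OF Z] quad_form_unit_vec[OF Z] by simp
  have "unit_vec 1 0 \<noteq> (0\<^sub>v 1 :: real vec)" by (metis index_unit_vec(1) index_zero_vec(1) less_one one_neq_zero)
  then show "0 < det Z"
    using assms \<open>det Z = quad_form Z (unit_vec 1 0)\<close> unfolding pd_mat_quad_form_iff by simp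
qed

lemma pd_det_loewner_mono:
  fixes A B :: "real mat"
  assumes "sym_mat n A" "pd_mat n B" "\<And>v. v \<in> carrier_vec n \<Longrightarrow> quad_form B v \<le> quad_form A v"
  shows "0 < det B \<and> det B \<le> det A"
  using assms
proof (induction n arbitrary: A B)
  case 0
  then show ?case unfolding pd_mat_def sym_mat_def by simp
next
  case (Suc n)
  have "sym_mat (n + 1) A" "sym_mat (n + 1) B" using Suc.prems(1,2) unfolding pd_mat_def by simp_all
  then obtain XA RA ZA XB RB ZB where
    XA: "XA \<in> carrier_mat n n" and RA: "RA \<in> carrier_mat 1 n" and ZA: "ZA \<in> carrier_mat 1 1"
    and A: "A = four_block_mat XA RA\<^sup>T RA ZA"
    and XB: "XB \<in> carrier_mat n n" and RB: "RB \<in> carrier_mat 1 n" and ZB: "ZB \<in> carrier_mat 1 1"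
    and B: "B = four_block_mat XB RB\<^sup>T RB ZB"
    by (metis sym_mat_four_block_split)
  have le: "quad_form (four_block_mat XB RB\<^sup>T RB ZB) x \<le> quad_form (four_block_mat XA RA\<^sup>T RA ZA) x"
    if "x \<in> carrier_vec (n + 1)" for x
    using Suc.prems(3) that A B by simp
  have ZB_pd: "pd_mat 1 ZB" using pd_mat_four_block_lower_right[OF XB RB ZB] Suc.prems(2) B by simp
  note Z_le = four_block_loewner_le_lower_right[OF XA RA ZA XB RB ZB le]
  have ZA_pd: "pd_mat 1 ZA"
    using pd_mat_mono[OF ZB_pd _ Z_le] sym_mat_four_block_iff[OF XA RA ZA] Suc.prems(1) A ZA
    unfolding sym_mat_def by simp
  define SA where "SA = XA - RA\<^sup>T * inv_mat ZA * RA"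
  define SB where "SB = XB - RB\<^sup>T * inv_mat ZB * RB"
  have "0 < det SB \<and> det SB \<le> det SA"
  proof (rule Suc.IH)
    show "sym_mat n SA" unfolding SA_def
      using sym_mat_four_block_iff[OF XA RA ZA] Suc.prems(1) A XA
      by (intro sym_mat_schur_complement[OF _ RA ZA_pd]) (simp add: sym_mat_def)
    show "pd_mat n SB" unfolding SB_def
      using pd_schur_complement[OF XB RB ZB_pd] Suc.prems(2) B by simp
    show "quad_form SB v \<le> quad_form SA v" if "v \<in> carrier_vec n" for v
      unfolding SA_def SB_def using schur_complement_mono[OF XA RA ZA_pd XB RB ZB_pd le that] by simp
  qed
  moreover have "0 < det ZB \<and> det ZB \<le> det ZA"
    using pd_mat_1x1_det[OF ZA_pd] pd_mat_1x1_det[OF ZB_pd] Z_le[of "unit_vec 1 0"] by simp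
  moreover have "det A = det SA * det ZA" "det B = det SB * det ZB"
    unfolding A B SA_def SB_def
    using det_four_block_schur[OF XA RA ZA pd_mat_inverse(1,2)[OF ZA_pd]]
      det_four_block_schur[OF XB RB ZB pd_mat_inverse(1,2)[OF ZB_pd]] by simp_all
  ultimately show ?case by (simp add: mult_mono)
qed

lemma pd_mat_det_pos:
  assumes "pd_mat n M"
  shows "0 < det M"
  using pd_det_loewner_mono[of n M M] assms unfolding pd_mat_def by simp

section \<open>The convex reformulation\<close>

lemma minimizers_correspond:
  fixes f :: "'a \<Rightarrow> 'd :: linorder" and g :: "'a \<Rightarrow> 'b \<Rightarrow> 'c :: linorder"
  assumes mono: "strict_mono \<phi>"
    and lift: "\<And>x. F x \<Longrightarrow> \<exists>p. F' x p \<and> f x = \<phi> (g x p)"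
    and proj: "\<And>x p. F' x p \<Longrightarrow> F x \<and> f x \<le> \<phi> (g x p)"
  shows "(F x \<and> (\<forall>x'. F x' \<longrightarrow> f x \<le> f x'))
    \<longleftrightarrow> (\<exists>p. F' x p \<and> (\<forall>x' p'. F' x' p' \<longrightarrow> g x p \<le> g x' p'))"
proof
  assume min: "F x \<and> (\<forall>x'. F x' \<longrightarrow> f x \<le> f x')"
  then obtain p where p: "F' x p" "f x = \<phi> (g x p)" using lift by blast
  have "g x p \<le> g x' p'" if "F' x' p'" for x' p'
    using proj[OF that] min p strict_mono_less_eq[OF mono] by fastforce
  then show "\<exists>p. F' x p \<and> (\<forall>x' p'. F' x' p' \<longrightarrow> g x p \<le> g x' p')" using p by blast
next
  assume "\<exists>p. F' x p \<and> (\<forall>x' p'. F' x' p' \<longrightarrow> g x p \<le> g x' p')"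
  then obtain p where p: "F' x p" "\<And>x' p'. F' x' p' \<Longrightarrow> g x p \<le> g x' p'" by blast
  have "f x \<le> f x'" if "F x'" for x'
    using lift[OF that] proj[OF p(1)] p(2) strict_mono_less_eq[OF mono] by (metis order_trans)
  then show "F x \<and> (\<forall>x'. F x' \<longrightarrow> f x \<le> f x')" using proj[OF p(1)] by blast
qed

lemma SigS_carrier:
  "D \<in> carrier_mat ns nx \<Longrightarrow> SigS K nx A D Sig1 SigT \<in> carrier_mat (K * ns) (K * ns)"
  unfolding SigS_def kron_id_def carrier_mat_def by simp

lemma SigSZ_carrier:
  "D \<in> carrier_mat ns nx \<Longrightarrow> SigSZ K nx ny A C D Sig1 SigT G \<in> carrier_mat (K * ny) (K * ns)"
  unfolding SigSZ_def kron_id_def blockdiag_def carrier_mat_def by simp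

lemma cost_eq_conv_obj_SigS_cond:
  "cost K nx ny m A C D Sig1 SigT SigH SigZ G
     = 1/2 * log 2 (det (SigS K nx A D Sig1 SigT))
       + 1/2 * conv_obj SigH (SigS_cond K nx ny A C D Sig1 SigT SigZ G)
       - real m / 2 - real m / 2 * log 2 (2 * pi)"
  unfolding cost_def mutual_info_def diff_entropy_def conv_obj_def by (simp add: algebra_simps)

lemma orig_feasible_imp_conv_feasible:
  assumes D: "D \<in> carrier_mat ns nx"
    and feas: "orig_feasible K nx ny ns m A C D Sig1 SigT SigH SigZ G"
  shows "conv_feasible K nx ny ns m A C D Sig1 SigT SigH (SigS_cond K nx ny A C D Sig1 SigT SigZ G) SigZ G"
proof -
  let ?S = "SigS K nx A D Sig1 SigT" and ?T = "SigSZ K nx ny A C D Sig1 SigT G"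
  have Z: "pd_mat (K * ny) SigZ" and P: "pd_mat (K * ns) (?S - ?T\<^sup>T * inv_mat SigZ * ?T)"
    using feas unfolding orig_feasible_def SigS_cond_def by simp_all
  have "?S - (?S - ?T\<^sup>T * inv_mat SigZ * ?T) = ?T\<^sup>T * inv_mat SigZ * ?T"
    using SigS_carrier[OF D] SigSZ_carrier[OF D] pd_mat_inverse(1)[OF Z] by auto
  then show ?thesis
    using feas pd_mat_imp_psd_mat[OF P] pd_mat_det_pos[OF P] psd_four_block_congruence[OF SigSZ_carrier[OF D] Z]
    unfolding orig_feasible_def conv_feasible_def SigS_cond_def by simp
qed

lemma conv_feasible_imp_orig_feasible:
  assumes D: "D \<in> carrier_mat ns nx"
    and feas: "conv_feasible K nx ny ns m A C D Sig1 SigT SigH PiK SigZ G"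
  shows "orig_feasible K nx ny ns m A C D Sig1 SigT SigH SigZ G"
    and "det PiK \<le> det (SigS_cond K nx ny A C D Sig1 SigT SigZ G)"
proof -
  let ?S = "SigS K nx A D Sig1 SigT" and ?T = "SigSZ K nx ny A C D Sig1 SigT G"
  have Z: "pd_mat (K * ny) SigZ" and Pi: "psd_mat (K * ns) PiK" "det PiK > 0"
    and L: "psd_mat (K * ns + K * ny) (four_block_mat (?S - PiK) ?T\<^sup>T ?T SigZ)"
    using feas unfolding conv_feasible_def by simp_all
  have Pi_pd: "pd_mat (K * ns) PiK" using psd_mat_det_nonzero_imp_pd_mat[OF Pi(1)] Pi(2) by simp
  then have "sym_mat (K * ns) PiK" unfolding pd_mat_def by simp
  note le = psd_four_block_imp_le_schur_complement[OF SigS_carrier[OF D] SigSZ_carrier[OF D] Z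
      this L, unfolded SigS_cond_def[symmetric]]
  have "pd_mat (K * ns) (SigS_cond K nx ny A C D Sig1 SigT SigZ G)"
    using pd_mat_mono[OF Pi_pd le] by simp
  then show "orig_feasible K nx ny ns m A C D Sig1 SigT SigH SigZ G"
    using feas unfolding orig_feasible_def conv_feasible_def by simp
  show "det PiK \<le> det (SigS_cond K nx ny A C D Sig1 SigT SigZ G)"
    using pd_det_loewner_mono[OF le(1) Pi_pd le(2)] by simp
qed

lemma cost_le_conv_obj:
  assumes D: "D \<in> carrier_mat ns nx"
    and feas: "conv_feasible K nx ny ns m A C D Sig1 SigT SigH PiK SigZ G"
  shows "cost K nx ny m A C D Sig1 SigT SigH SigZ G
    \<le> 1/2 * log 2 (det (SigS K nx A D Sig1 SigT)) + 1/2 * conv_obj SigH PiK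
      - real m / 2 - real m / 2 * log 2 (2 * pi)"
proof -
  have "0 < det PiK" using feas unfolding conv_feasible_def by simp
  then have "log 2 (det PiK) \<le> log 2 (det (SigS_cond K nx ny A C D Sig1 SigT SigZ G))"
    using conv_feasible_imp_orig_feasible(2)[OF D feas] by simp
  then show ?thesis unfolding cost_eq_conv_obj_SigS_cond conv_obj_def by simp
qed

lemma cost_minimizer_iff_conv_minimizer:
  assumes D: "D \<in> carrier_mat ns nx"
  shows "(orig_feasible K nx ny ns m A C D Sig1 SigT SigH SigZ G \<and>
      (\<forall>SigH' SigZ' G'. orig_feasible K nx ny ns m A C D Sig1 SigT SigH' SigZ' G' \<longrightarrow>
        cost K nx ny m A C D Sig1 SigT SigH SigZ G \<le> cost K nx ny m A C D Sig1 SigT SigH' SigZ' G'))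
    \<longleftrightarrow> (\<exists>PiK. conv_feasible K nx ny ns m A C D Sig1 SigT SigH PiK SigZ G \<and>
      (\<forall>SigH' PiK' SigZ' G'. conv_feasible K nx ny ns m A C D Sig1 SigT SigH' PiK' SigZ' G' \<longrightarrow>
        conv_obj SigH PiK \<le> conv_obj SigH' PiK'))"
proof -
  define \<phi> :: "real \<Rightarrow> real" where
    "\<phi> t = 1/2 * log 2 (det (SigS K nx A D Sig1 SigT)) + 1/2 * t - real m / 2 - real m / 2 * log 2 (2 * pi)"
    for t
  let ?orig = "\<lambda>(SigH, SigZ, G). orig_feasible K nx ny ns m A C D Sig1 SigT SigH SigZ G"
  let ?conv = "\<lambda>(SigH, SigZ, G) PiK. conv_feasible K nx ny ns m A C D Sig1 SigT SigH PiK SigZ G"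
  let ?cost = "\<lambda>(SigH, SigZ, G). cost K nx ny m A C D Sig1 SigT SigH SigZ G"
  let ?obj = "\<lambda>(SigH, SigZ, G). conv_obj SigH"
  have "(?orig (SigH, SigZ, G) \<and> (\<forall>x'. ?orig x' \<longrightarrow> ?cost (SigH, SigZ, G) \<le> ?cost x'))
    \<longleftrightarrow> (\<exists>PiK. ?conv (SigH, SigZ, G) PiK \<and>
      (\<forall>x' PiK'. ?conv x' PiK' \<longrightarrow> ?obj (SigH, SigZ, G) PiK \<le> ?obj x' PiK'))"
  proof (rule minimizers_correspond)
    show "strict_mono \<phi>" unfolding \<phi>_def strict_mono_def by simp
    show "\<exists>PiK. ?conv x PiK \<and> ?cost x = \<phi> (?obj x PiK)" if "?orig x" for x
      using that orig_feasible_imp_conv_feasible[OF D] cost_eq_conv_obj_SigS_cond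
      unfolding \<phi>_def by (cases x) fastforce
    show "?orig x \<and> ?cost x \<le> \<phi> (?obj x PiK)" if "?conv x PiK" for x PiK
      using that conv_feasible_imp_orig_feasible(1)[OF D] cost_le_conv_obj[OF D]
      unfolding \<phi>_def by (cases x) fastforce
  qed
  then show ?thesis unfolding split_paired_All by simp blast
qed

theorem lemma2:
  fixes K nx ny ns m :: nat
    and A C D Sig1 SigT SigW :: "real mat"
  assumes K: "K \<ge> 2"
    and A: "A \<in> carrier_mat nx nx"
    and C: "C \<in> carrier_mat ny nx"
    and D: "D \<in> carrier_mat ns nx"
    and Drank: "vec_space.rank ns D = ns"
    and Sig1: "pd_mat nx Sig1"
    and SigT: "pd_mat nx SigT"
    and SigW: "pd_mat ny SigW"
  shows
    \<comment> \<open>(i) every feasible point of the original problem: minimising over \<Pi>_K gives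
        cost = (1/2) log det \<Sigma>^S_K + (1/2) (convex objective) - m/2 - (m/2) log(2\<pi>)\<close>
    "(\<forall>SigH SigZ G. orig_feasible K nx ny ns m A C D Sig1 SigT SigH SigZ G \<longrightarrow>
        (\<exists>PiK. conv_feasible K nx ny ns m A C D Sig1 SigT SigH PiK SigZ G \<and>
              cost K nx ny m A C D Sig1 SigT SigH SigZ G
                = 1/2 * log 2 (det (SigS K nx A D Sig1 SigT)) + 1/2 * conv_obj SigH PiK
                  - real m / 2 - real m / 2 * log 2 (2 * pi)) \<and>
        (\<forall>PiK. conv_feasible K nx ny ns m A C D Sig1 SigT SigH PiK SigZ G \<longrightarrow>
              cost K nx ny m A C D Sig1 SigT SigH SigZ G
                \<le> 1/2 * log 2 (det (SigS K nx A D Sig1 SigT)) + 1/2 * conv_obj SigH PiK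
                  - real m / 2 - real m / 2 * log 2 (2 * pi)))
     \<and> \<comment> \<open>(ii) every feasible point of the convex program projects to a feasible point\<close>
     (\<forall>SigH PiK SigZ G. conv_feasible K nx ny ns m A C D Sig1 SigT SigH PiK SigZ G \<longrightarrow>
        orig_feasible K nx ny ns m A C D Sig1 SigT SigH SigZ G)
     \<and> \<comment> \<open>(iii) minimisers correspond\<close>
     (\<forall>SigH SigZ G.
        (orig_feasible K nx ny ns m A C D Sig1 SigT SigH SigZ G \<and>
         (\<forall>SigH' SigZ' G'. orig_feasible K nx ny ns m A C D Sig1 SigT SigH' SigZ' G' \<longrightarrow>
            cost K nx ny m A C D Sig1 SigT SigH SigZ G \<le> cost K nx ny m A C D Sig1 SigT SigH' SigZ' G'))
        \<longleftrightarrow>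
        (\<exists>PiK. conv_feasible K nx ny ns m A C D Sig1 SigT SigH PiK SigZ G \<and>
           (\<forall>SigH' PiK' SigZ' G'. conv_feasible K nx ny ns m A C D Sig1 SigT SigH' PiK' SigZ' G' \<longrightarrow>
              conv_obj SigH PiK \<le> conv_obj SigH' PiK')))"
proof -
  (* Only the dimensions of D are used: the model hypotheses make Sigma^S_K positive definite,
     but both feasible sets already contain everything the reformulation needs. *)
  have lift: "\<exists>PiK. conv_feasible K nx ny ns m A C D Sig1 SigT SigH PiK SigZ G \<and>
      cost K nx ny m A C D Sig1 SigT SigH SigZ G = 1/2 * log 2 (det (SigS K nx A D Sig1 SigT))
        + 1/2 * conv_obj SigH PiK - real m / 2 - real m / 2 * log 2 (2 * pi)"
    if "orig_feasible K nx ny ns m A C D Sig1 SigT SigH SigZ G" for SigH SigZ G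
    using orig_feasible_imp_conv_feasible[OF D that] cost_eq_conv_obj_SigS_cond by blast
  show ?thesis
    using lift conv_feasible_imp_orig_feasible(1)[OF D] cost_le_conv_obj[OF D]
      cost_minimizer_iff_conv_minimizer[OF D]
    by (intro conjI allI impI) blast+
qed

end
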